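(* Let $X\subset\mathbb{R}^n$ be a closed set which is the closure of its interior, $f:X\to\mathbb{R}^n$ locally Lipschitz, and suppose $\dot x=f(x)$ is forward complete with flow $\varphi_t$. Let $K$ be a closed convex cone with nonempty interior and suppose the system is strongly monotone: $\xi_1\succ\xi_2$ implies $\varphi_t(\xi_1)\gg\varphi_t(\xi_2)$ for all $t>0$, $\xi_1,\xi_2\in X$. Let $v\in\operatorname{int}(K)$, $|v|=1$, with $X$ invariant under translation by $v$ and $\varphi_t(\xi+\lambda v)=\varphi_t(\xi)+\lambda v$ for all $\lambda\in\mathbb{R}$, $\xi\in X$, $t\ge0$. Let $V(x)=\inf\{\alpha\in\mathbb{R}:x\preceq\alpha v\}$. Then for all $\xi_1,\xi_2\in X$ and all $t>0$, $$V(\varphi_t(\xi_1)-\varphi_t(\xi_2))\le V(\xi_1-\xi_2),$$ and the inequality is strict whenever $\xi_1-\xi_2\notin\operatorname{span}\{v\}$.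
   Context: The cone $K$ satisfies $K+K\subset K$, $\alpha K\subset K$ for $\alpha\ge0$, $K\cap(-K)=\{0\}$. $\xi_1\succeq\xi_2$ iff $\xi_1-\xi_2\in K$; $\xi_1\succ\xi_2$ iff additionally $\xi_1\neq\xi_2$; $\xi_1\gg\xi_2$ iff $\xi_1-\xi_2\in\operatorname{int}(K)$. Forward complete means every solution is uniquely defined in $X$ on an interval containing $[0,\infty)$ in its interior. *)

theory Defs
  imports "HOL-Analysis.Analysis"
begin

definition kle :: "'a::real_normed_vector set \<Rightarrow> 'a \<Rightarrow> 'a \<Rightarrow> bool" where
  "kle K x y \<longleftrightarrow> y - x \<in> K"

definition klt :: "'a::real_normed_vector set \<Rightarrow> 'a \<Rightarrow> 'a \<Rightarrow> bool" where
  "klt K x y \<longleftrightarrow> kle K x y \<and> x \<noteq> y"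

definition kll :: "'a::real_normed_vector set \<Rightarrow> 'a \<Rightarrow> 'a \<Rightarrow> bool" where
  "kll K x y \<longleftrightarrow> y - x \<in> interior K"

definition locally_lipschitz_on :: "'a::metric_space set \<Rightarrow> ('a \<Rightarrow> 'b::metric_space) \<Rightarrow> bool" where
  "locally_lipschitz_on X f \<longleftrightarrow>
     (\<forall>x\<in>X. \<exists>u>0. \<exists>L. L-lipschitz_on (cball x u \<inter> X) f)"

definition ode_solution_on :: "('a::real_normed_vector \<Rightarrow> 'a) \<Rightarrow> 'a set \<Rightarrow> real set \<Rightarrow> (real \<Rightarrow> 'a) \<Rightarrow> bool" where
  "ode_solution_on f X I y \<longleftrightarrow> is_interval I \<and>
     (\<forall>t\<in>I. y t \<in> X \<and> (y has_vector_derivative f (y t)) (at t within I))"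

definition forward_complete_flow ::
  "('a::real_normed_vector \<Rightarrow> 'a) \<Rightarrow> 'a set \<Rightarrow> (real \<Rightarrow> 'a \<Rightarrow> 'a) \<Rightarrow> bool" where
  "forward_complete_flow f X phi \<longleftrightarrow>
     (\<forall>xi\<in>X. (\<exists>e>0. ode_solution_on f X {-e<..} (\<lambda>t. phi t xi)) \<and> phi 0 xi = xi \<and>
        (\<forall>I y. ode_solution_on f X I y \<and> 0 \<in> I \<and> y 0 = xi \<longrightarrow>
           (\<forall>t\<in>I. t \<ge> 0 \<longrightarrow> y t = phi t xi)))"

definition Vfun :: "'a::real_normed_vector set \<Rightarrow> 'a \<Rightarrow> 'a \<Rightarrow> real" where
  "Vfun K v x = Inf {\<alpha>. kle K x (\<alpha> *\<^sub>R v)}"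

end

theory Submission
  imports Defs
begin

text \<open>Put \<open>a = V(\<xi>\<^sub>1 - \<xi>\<^sub>2)\<close>. As \<open>v\<close> is interior to the closed pointed cone \<open>K\<close>, the
  infimum defining \<open>V\<close> is finite and attained, so \<open>\<xi>\<^sub>1 \<preceq> \<xi>\<^sub>2 + a v\<close>, and \<open>\<xi>\<^sub>2 + a v \<in> X\<close>.
  Either \<open>\<xi>\<^sub>1 = \<xi>\<^sub>2 + a v\<close>, and then translation equivariance gives
  \<open>\<phi>\<^sub>t(\<xi>\<^sub>1) - \<phi>\<^sub>t(\<xi>\<^sub>2) = a v\<close>; or \<open>\<xi>\<^sub>1 \<prec> \<xi>\<^sub>2 + a v\<close>, and strong monotonicity with
  equivariance gives \<open>\<phi>\<^sub>t(\<xi>\<^sub>1) - \<phi>\<^sub>t(\<xi>\<^sub>2) \<ll> a v\<close>, whence \<open>V(\<phi>\<^sub>t(\<xi>\<^sub>1) - \<phi>\<^sub>t(\<xi>\<^sub>2)) < a\<close>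
  because \<open>int(K)\<close> is open.\<close>

lemma interior_add_scaleR_mem:
  fixes x w :: "'a::real_normed_vector"
  assumes "x \<in> interior S"
  obtains e where "e > 0" "\<And>s. \<bar>s\<bar> < e \<Longrightarrow> x + s *\<^sub>R w \<in> S"
proof -
  obtain r where r: "r > 0" "ball x r \<subseteq> S"
    using assms mem_interior by blast
  show ?thesis
  proof (rule that)
    show "r / (norm w + 1) > 0"
      using r by (simp add: add_nonneg_pos)
    fix s :: real
    assume "\<bar>s\<bar> < r / (norm w + 1)"
    then have "\<bar>s\<bar> * (norm w + 1) < r"
      by (simp add: pos_less_divide_eq add_nonneg_pos)
    moreover have "\<bar>s\<bar> * norm w \<le> \<bar>s\<bar> * (norm w + 1)"
      by (simp add: mult_left_mono)
    ultimately have "dist x (x + s *\<^sub>R w) < r"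
      by (simp add: dist_norm)
    then show "x + s *\<^sub>R w \<in> S"
      using r by auto
  qed
qed

locale order_unit =
  fixes K :: "'a::real_normed_vector set" and v :: 'a
  assumes K_add: "\<forall>x\<in>K. \<forall>y\<in>K. x + y \<in> K"
    and K_cone: "cone K"
    and K_pointed: "K \<inter> uminus ` K = {0}"
    and K_closed: "closed K"
    and v_interior: "v \<in> interior K"
    and v_nonzero: "v \<noteq> 0"
begin

lemma scaleR_mem: "x \<in> K \<Longrightarrow> 0 \<le> c \<Longrightarrow> c *\<^sub>R x \<in> K"
  using K_cone unfolding cone_def by blast

lemma pointedD: "x \<in> K \<Longrightarrow> - x \<in> K \<Longrightarrow> x = 0"
  using K_pointed by (metis IntI image_eqI minus_minus singletonD)

lemma v_mem: "v \<in> K"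
  using v_interior interior_subset by blast

lemma nonneg_if_scaleR_v_mem:
  assumes "c *\<^sub>R v \<in> K"
  shows "0 \<le> c"
proof (rule ccontr)
  assume "\<not> 0 \<le> c"
  then have "(- 1 / c) *\<^sub>R (c *\<^sub>R v) \<in> K"
    using scaleR_mem[OF assms, of "- 1 / c"] by simp
  then have "- v \<in> K"
    using \<open>\<not> 0 \<le> c\<close> by simp
  then show False
    using pointedD v_mem v_nonzero by blast
qed

lemma order_unit_dominates: obtains \<beta> where "\<beta> *\<^sub>R v + x \<in> K"
proof -
  obtain e where e: "e > 0" "\<And>s. \<bar>s\<bar> < e \<Longrightarrow> v + s *\<^sub>R x \<in> K"
    using interior_add_scaleR_mem[OF v_interior] by blast
  have "(2 / e) *\<^sub>R (v + (e / 2) *\<^sub>R x) \<in> K"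
    using e by (intro scaleR_mem) auto
  then have "(2 / e) *\<^sub>R v + x \<in> K"
    using e by (simp add: algebra_simps)
  then show ?thesis
    by (rule that)
qed

lemma bdd_below_kle_scaleR: "bdd_below {\<alpha>. kle K x (\<alpha> *\<^sub>R v)}"
proof -
  obtain \<beta> where \<beta>: "\<beta> *\<^sub>R v + x \<in> K"
    by (rule order_unit_dominates)
  have "- \<beta> \<le> \<alpha>" if "kle K x (\<alpha> *\<^sub>R v)" for \<alpha>
  proof -
    have "(\<alpha> *\<^sub>R v - x) + (\<beta> *\<^sub>R v + x) \<in> K"
      using K_add \<beta> that unfolding kle_def by blast
    then have "(\<alpha> + \<beta>) *\<^sub>R v \<in> K"
      by (simp add: scaleR_add_left)
    then show ?thesis
      using nonneg_if_scaleR_v_mem by fastforce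
  qed
  then show ?thesis
    unfolding bdd_below_def by blast
qed

lemma Vfun_kle: "kle K x (Vfun K v x *\<^sub>R v)"
proof -
  let ?S = "{\<alpha>. kle K x (\<alpha> *\<^sub>R v)}"
  obtain \<alpha> where "\<alpha> *\<^sub>R v + - x \<in> K"
    by (rule order_unit_dominates)
  then have "\<alpha> \<in> ?S"
    by (simp add: kle_def)
  then have nonempty: "?S \<noteq> {}"
    by blast
  have "continuous_on UNIV (\<lambda>\<alpha>. \<alpha> *\<^sub>R v - x)"
    by (intro continuous_on_diff continuous_on_scaleR continuous_on_id continuous_on_const)
  then have "closed ((\<lambda>\<alpha>. \<alpha> *\<^sub>R v - x) -` K)"
    by (rule closed_vimage[OF K_closed])
  then have "closed ?S"
    by (simp add: kle_def vimage_def)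
  with nonempty have "Inf ?S \<in> ?S"
    by (intro closed_contains_Inf bdd_below_kle_scaleR)
  then show ?thesis
    by (simp add: Vfun_def)
qed

lemma Vfun_le: "kle K x (a *\<^sub>R v) \<Longrightarrow> Vfun K v x \<le> a"
  unfolding Vfun_def by (rule cInf_lower) (simp_all add: bdd_below_kle_scaleR)

lemma Vfun_scaleR: "Vfun K v (a *\<^sub>R v) = a"
proof (rule order.antisym)
  show "Vfun K v (a *\<^sub>R v) \<le> a"
    using scaleR_mem[OF v_mem, of 0] by (intro Vfun_le) (simp add: kle_def)
  have "(Vfun K v (a *\<^sub>R v) - a) *\<^sub>R v \<in> K"
    using Vfun_kle[of "a *\<^sub>R v"] by (simp add: kle_def scaleR_diff_left)
  then show "a \<le> Vfun K v (a *\<^sub>R v)"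
    using nonneg_if_scaleR_v_mem by fastforce
qed

lemma Vfun_less:
  assumes "kll K x (a *\<^sub>R v)"
  shows "Vfun K v x < a"
proof -
  obtain e where e: "e > 0" "\<And>s. \<bar>s\<bar> < e \<Longrightarrow> (a *\<^sub>R v - x) + s *\<^sub>R v \<in> K"
    using interior_add_scaleR_mem assms unfolding kll_def by blast
  have "(a *\<^sub>R v - x) + (- e / 2) *\<^sub>R v \<in> K"
    by (rule e(2)) (use e(1) in simp)
  also have "(a *\<^sub>R v - x) + (- e / 2) *\<^sub>R v = (a - e / 2) *\<^sub>R v - x"
    by (simp add: algebra_simps)
  finally have "kle K x ((a - e / 2) *\<^sub>R v)"
    unfolding kle_def .
  then have "Vfun K v x \<le> a - e / 2"
    by (rule Vfun_le)
  with e(1) show ?thesis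
    by simp
qed

lemma Vfun_diff_equivariant_monotone:
  assumes X_transl: "\<And>\<xi> c. \<xi> \<in> X \<Longrightarrow> \<xi> + c *\<^sub>R v \<in> X"
    and g_transl: "\<And>\<xi> c. \<xi> \<in> X \<Longrightarrow> g (\<xi> + c *\<^sub>R v) = g \<xi> + c *\<^sub>R v"
    and g_mono: "\<And>\<xi>\<^sub>1 \<xi>\<^sub>2. \<xi>\<^sub>1 \<in> X \<Longrightarrow> \<xi>\<^sub>2 \<in> X \<Longrightarrow> klt K \<xi>\<^sub>2 \<xi>\<^sub>1 \<Longrightarrow> kll K (g \<xi>\<^sub>2) (g \<xi>\<^sub>1)"
    and \<xi>: "\<xi>\<^sub>1 \<in> X" "\<xi>\<^sub>2 \<in> X"
  shows "Vfun K v (g \<xi>\<^sub>1 - g \<xi>\<^sub>2) \<le> Vfun K v (\<xi>\<^sub>1 - \<xi>\<^sub>2)"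
    and "\<xi>\<^sub>1 - \<xi>\<^sub>2 \<notin> span {v} \<Longrightarrow> Vfun K v (g \<xi>\<^sub>1 - g \<xi>\<^sub>2) < Vfun K v (\<xi>\<^sub>1 - \<xi>\<^sub>2)"
proof -
  define a where "a = Vfun K v (\<xi>\<^sub>1 - \<xi>\<^sub>2)"
  have g_shift: "g (\<xi>\<^sub>2 + a *\<^sub>R v) = g \<xi>\<^sub>2 + a *\<^sub>R v"
    using g_transl \<xi> by blast
  have "kle K \<xi>\<^sub>1 (\<xi>\<^sub>2 + a *\<^sub>R v)"
    using Vfun_kle[of "\<xi>\<^sub>1 - \<xi>\<^sub>2"] by (simp add: a_def kle_def algebra_simps)
  then consider "\<xi>\<^sub>1 = \<xi>\<^sub>2 + a *\<^sub>R v" | "klt K \<xi>\<^sub>1 (\<xi>\<^sub>2 + a *\<^sub>R v)"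
    by (auto simp: klt_def)
  then have "Vfun K v (g \<xi>\<^sub>1 - g \<xi>\<^sub>2) = a \<and> \<xi>\<^sub>1 - \<xi>\<^sub>2 \<in> span {v} \<or> Vfun K v (g \<xi>\<^sub>1 - g \<xi>\<^sub>2) < a"
  proof cases
    case 1
    then have "g \<xi>\<^sub>1 - g \<xi>\<^sub>2 = a *\<^sub>R v"
      using g_shift by simp
    moreover have "\<xi>\<^sub>1 - \<xi>\<^sub>2 \<in> span {v}"
      using 1 by (simp add: span_base span_scale)
    ultimately show ?thesis
      by (simp add: Vfun_scaleR)
  next
    case 2
    moreover have "\<xi>\<^sub>2 + a *\<^sub>R v \<in> X"
      using X_transl \<xi>(2) .
    ultimately have "kll K (g \<xi>\<^sub>1) (g \<xi>\<^sub>2 + a *\<^sub>R v)"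
      using g_mono \<xi>(1) g_shift by metis
    then have "kll K (g \<xi>\<^sub>1 - g \<xi>\<^sub>2) (a *\<^sub>R v)"
      by (simp add: kll_def algebra_simps)
    then show ?thesis
      by (simp add: Vfun_less)
  qed
  then show "Vfun K v (g \<xi>\<^sub>1 - g \<xi>\<^sub>2) \<le> a"
    and "\<xi>\<^sub>1 - \<xi>\<^sub>2 \<notin> span {v} \<Longrightarrow> Vfun K v (g \<xi>\<^sub>1 - g \<xi>\<^sub>2) < a"
    by auto
qed

end

theorem lemma3:
  fixes X :: "(real ^ 'n) set" and f :: "real ^ 'n \<Rightarrow> real ^ 'n"
    and phi :: "real \<Rightarrow> real ^ 'n \<Rightarrow> real ^ 'n"
    and K :: "(real ^ 'n) set" and v :: "real ^ 'n"
  assumes X_closed: "closed X"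
    and X_reg: "X = closure (interior X)"
    and f_lip: "locally_lipschitz_on X f"
    and fc: "forward_complete_flow f X phi"
    and K_add: "\<forall>x\<in>K. \<forall>y\<in>K. x + y \<in> K"
    and K_cone: "cone K"
    and K_pointed: "K \<inter> uminus ` K = {0}"
    and K_closed: "closed K"
    and K_convex: "convex K"
    and K_int: "interior K \<noteq> {}"
    and strong_mono: "\<forall>xi1\<in>X. \<forall>xi2\<in>X. klt K xi2 xi1 \<longrightarrow>
                        (\<forall>t>0. kll K (phi t xi2) (phi t xi1))"
    and v_int: "v \<in> interior K"
    and v_norm: "norm v = 1"
    and X_transl: "\<forall>xi\<in>X. \<forall>c::real. xi + c *\<^sub>R v \<in> X"
    and phi_transl: "\<forall>c::real. \<forall>xi\<in>X. \<forall>t\<ge>0. phi t (xi + c *\<^sub>R v) = phi t xi + c *\<^sub>R v"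
  shows "\<forall>xi1\<in>X. \<forall>xi2\<in>X. \<forall>t>0.
           Vfun K v (phi t xi1 - phi t xi2) \<le> Vfun K v (xi1 - xi2) \<and>
           (xi1 - xi2 \<notin> span {v} \<longrightarrow> Vfun K v (phi t xi1 - phi t xi2) < Vfun K v (xi1 - xi2))"
proof (intro ballI allI impI)
  interpret order_unit K v
    using assms by unfold_locales auto
  fix \<xi>\<^sub>1 \<xi>\<^sub>2 and t :: real
  assume \<xi>: "\<xi>\<^sub>1 \<in> X" "\<xi>\<^sub>2 \<in> X" and "t > 0"
  have transl: "\<xi> + c *\<^sub>R v \<in> X" if "\<xi> \<in> X" for \<xi> c
    using X_transl that by blast
  have equivariant: "phi t (\<xi> + c *\<^sub>R v) = phi t \<xi> + c *\<^sub>R v" if "\<xi> \<in> X" for \<xi> c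
    using phi_transl that \<open>t > 0\<close> by simp
  have mono: "kll K (phi t \<eta>\<^sub>2) (phi t \<eta>\<^sub>1)" if "\<eta>\<^sub>1 \<in> X" "\<eta>\<^sub>2 \<in> X" "klt K \<eta>\<^sub>2 \<eta>\<^sub>1" for \<eta>\<^sub>1 \<eta>\<^sub>2
    using strong_mono that \<open>t > 0\<close> by blast
  show "Vfun K v (phi t \<xi>\<^sub>1 - phi t \<xi>\<^sub>2) \<le> Vfun K v (\<xi>\<^sub>1 - \<xi>\<^sub>2) \<and>
    (\<xi>\<^sub>1 - \<xi>\<^sub>2 \<notin> span {v} \<longrightarrow> Vfun K v (phi t \<xi>\<^sub>1 - phi t \<xi>\<^sub>2) < Vfun K v (\<xi>\<^sub>1 - \<xi>\<^sub>2))"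
    using Vfun_diff_equivariant_monotone[OF transl equivariant mono \<xi>] by blast
qed

end
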